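(* Let $c_o>0$. Then the functional $-\mathcal{G}_R$ does not attain a minimum on the class of admissible surfaces that are topological discs; that is, there is no admissible disc-type surface $\Sigma_0$ with $-\mathcal{G}_R[\Sigma_0]\le-\mathcal{G}_R[\Sigma]$ for every admissible disc-type surface $\Sigma$.
   Context: Work in $\mathbf{R}^3$, coordinates $(x,y,z)$, $E_3=(0,0,1)$. An admissible surface is a connected, oriented, compact, smoothly embedded surface $\Sigma$ with boundary, interior in $\{z>0\}$, boundary in $\{z=0\}$, such that $\nu_3/z$ extends smoothly up to $z=0$. $\Omega$ is the region enclosed by $\Sigma$ and $\{z=0\}$, $\nu$ the unit normal pointing out of $\Omega$, $\nu_3=\nu\cdot E_3$. Principal curvatures: $d\nu(e_i)=-\kappa_ie_i$, $H=(\kappa_1+\kappa_2)/2$ (a round sphere of radius $R$ with outward normal has $H=-1/R$). With $\underline\Sigma=\Sigma\cap\{z\ge\underline z\}$ and $n$ the outward conormal of $\underline\Sigma$: $\mathcal{A}_R[\Sigma]=\lim_{\underline z\to0^+}\big(\int_{\underline\Sigma}z^{-2}d\Sigma+\underline z^{-1}\oint_{\partial\underline\Sigma}\partial_nz\,ds\big)$, $\mathcal{U}_R[\Sigma]=-\int_\Sigma\frac{\nu_3}{z}d\Sigma$, and $\mathcal{G}_R=\mathcal{A}_R-2c_o\mathcal{U}_R$. *)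

theory Defs
  imports "HOL-Analysis.Analysis"
begin

text \<open>Points of R^3 are of type real^3 with coordinates x = p$1, y = p$2, z = p$3.
  A disc-type surface is represented by a parametrisation of the closed unit disc
  (cball 0 1 in real^2); the surface is its image.\<close>

definition E3 :: "real^3" where "E3 = axis 3 1"

fun iter_dderiv :: "('a::real_normed_vector) list \<Rightarrow> ('a \<Rightarrow> 'b::real_normed_vector) \<Rightarrow> 'a \<Rightarrow> 'b" where
  "iter_dderiv [] f = f"
| "iter_dderiv (v # vs) f = (\<lambda>x. frechet_derivative (iter_dderiv vs f) (at x) v)"

definition smooth_on_open :: "('a::real_normed_vector \<Rightarrow> 'b::real_normed_vector) \<Rightarrow> 'a set \<Rightarrow> bool" where
  "smooth_on_open f U \<longleftrightarrow> open U \<and> (\<forall>vs. iter_dderiv vs f differentiable_on U)"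

definition smooth_upto :: "('a::real_normed_vector \<Rightarrow> 'b::real_normed_vector) \<Rightarrow> 'a set \<Rightarrow> bool" where
  "smooth_upto f S \<longleftrightarrow> (\<exists>g U. S \<subseteq> U \<and> smooth_on_open g U \<and> (\<forall>x\<in>S. g x = f x))"

definition Disc :: "(real^2) set" where "Disc = cball 0 1"

definition pd1 :: "(real^2 \<Rightarrow> real^3) \<Rightarrow> real^2 \<Rightarrow> real^3" where
  "pd1 \<phi> u = frechet_derivative \<phi> (at u) (axis 1 1)"
definition pd2 :: "(real^2 \<Rightarrow> real^3) \<Rightarrow> real^2 \<Rightarrow> real^3" where
  "pd2 \<phi> u = frechet_derivative \<phi> (at u) (axis 2 1)"
definition Nrm :: "(real^2 \<Rightarrow> real^3) \<Rightarrow> real^2 \<Rightarrow> real^3" where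
  "Nrm \<phi> u = cross3 (pd1 \<phi> u) (pd2 \<phi> u)"

definition smooth_embedded_disc :: "(real^2 \<Rightarrow> real^3) \<Rightarrow> bool" where
  "smooth_embedded_disc \<phi> \<longleftrightarrow> smooth_upto \<phi> Disc \<and> inj_on \<phi> Disc \<and>
     (\<forall>u\<in>Disc. \<phi> differentiable (at u) \<and> inj (frechet_derivative \<phi> (at u)))"

text \<open>The region Omega enclosed by the surface and the plane z = 0: the union of the bounded
  connected components of the open upper half space with the surface removed.\<close>
definition Omega :: "(real^2 \<Rightarrow> real^3) \<Rightarrow> (real^3) set" where
  "Omega \<phi> = (let S = {x::real^3. x$3 > 0} - \<phi> ` Disc in
      {x\<in>S. bounded (connected_component_set S x)})"

text \<open>Orientation sign making the unit normal point out of Omega.\<close>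
definition out_sign :: "(real^2 \<Rightarrow> real^3) \<Rightarrow> real" where
  "out_sign \<phi> = (if (\<forall>u\<in>ball 0 1. \<forall>\<^sub>F t in at_right 0.
        \<phi> u + t *\<^sub>R (Nrm \<phi> u /\<^sub>R norm (Nrm \<phi> u)) \<notin> Omega \<phi> \<and>
        \<phi> u - t *\<^sub>R (Nrm \<phi> u /\<^sub>R norm (Nrm \<phi> u)) \<in> Omega \<phi>) then 1 else -1)"

definition nu :: "(real^2 \<Rightarrow> real^3) \<Rightarrow> real^2 \<Rightarrow> real^3" where
  "nu \<phi> u = out_sign \<phi> *\<^sub>R (Nrm \<phi> u /\<^sub>R norm (Nrm \<phi> u))"
definition nu3 :: "(real^2 \<Rightarrow> real^3) \<Rightarrow> real^2 \<Rightarrow> real" where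
  "nu3 \<phi> u = nu \<phi> u \<bullet> E3"

definition admissible_disc :: "(real^2 \<Rightarrow> real^3) \<Rightarrow> bool" where
  "admissible_disc \<phi> \<longleftrightarrow> smooth_embedded_disc \<phi> \<and>
     (\<forall>u\<in>ball 0 1. (\<phi> u)$3 > 0) \<and> (\<forall>u\<in>sphere 0 1. (\<phi> u)$3 = 0) \<and>
     (\<exists>g. smooth_upto g Disc \<and> (\<forall>u\<in>ball 0 1. g u = nu3 \<phi> u / (\<phi> u)$3))"

definition surf_int :: "(real^2 \<Rightarrow> real^3) \<Rightarrow> (real^2) set \<Rightarrow> (real^2 \<Rightarrow> real) \<Rightarrow> real" where
  "surf_int \<phi> A f = integral A (\<lambda>u. f u * norm (Nrm \<phi> u))"

text \<open>Arclength line integral over a set C that is the image of a simple closed regular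
  C1 curve (independent of the parametrisation).\<close>
definition line_int :: "(real^3) set \<Rightarrow> (real^3 \<Rightarrow> real) \<Rightarrow> real" where
  "line_int C f = (THE I. \<exists>\<gamma>::real \<Rightarrow> real^3. simple_path \<gamma> \<and> pathfinish \<gamma> = pathstart \<gamma> \<and>
      \<gamma> C1_differentiable_on {0..1} \<and>
      (\<forall>t\<in>{0..1}. vector_derivative \<gamma> (at t within {0..1}) \<noteq> 0) \<and>
      path_image \<gamma> = C \<and>
      I = integral {0..1} (\<lambda>t. f (\<gamma> t) * norm (vector_derivative \<gamma> (at t within {0..1}))))"

text \<open>The outward conormal n of the superlevel part {z \<ge> zl} at its boundary curve {z = zl}
  is -grad_Sigma z / |grad_Sigma z| with grad_Sigma z = E3 - nu_3 nu, hence
  d_n z = n . E3 = - |E3 - nu_3 nu|.\<close>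
definition dn_z :: "(real^2 \<Rightarrow> real^3) \<Rightarrow> real^2 \<Rightarrow> real" where
  "dn_z \<phi> u = (let g = E3 - nu3 \<phi> u *\<^sub>R nu \<phi> u in - (g /\<^sub>R norm g) \<bullet> E3)"

definition A_R :: "(real^2 \<Rightarrow> real^3) \<Rightarrow> real" where
  "A_R \<phi> = Lim (at_right 0) (\<lambda>zl.
      surf_int \<phi> {u\<in>Disc. (\<phi> u)$3 \<ge> zl} (\<lambda>u. 1 / ((\<phi> u)$3)\<^sup>2)
    + (1 / zl) * line_int (\<phi> ` {u\<in>Disc. (\<phi> u)$3 = zl})
                  (\<lambda>p. dn_z \<phi> (THE u. u \<in> Disc \<and> \<phi> u = p)))"

definition U_R :: "(real^2 \<Rightarrow> real^3) \<Rightarrow> real" where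
  "U_R \<phi> = - surf_int \<phi> (ball 0 1) (\<lambda>u. nu3 \<phi> u / (\<phi> u)$3)"

definition G_R :: "real \<Rightarrow> (real^2 \<Rightarrow> real^3) \<Rightarrow> real" where
  "G_R c\<^sub>o \<phi> = A_R \<phi> - 2 * c\<^sub>o * U_R \<phi>"

end

theory Submission
  imports Defs "HOL-Complex_Analysis.Winding_Numbers"
begin

text \<open>The hemispheres of radius R centred at the origin, parametrised by R times the inverse
  stereographic projection of the unit disc, are admissible discs. Their outward unit normal is
  x / R, so nu_3 / z = 1 / R and U_R is -R J with J the (positive) area of the unit hemisphere
  in stereographic coordinates. The renormalised area is invariant under dilation: the truncated
  area of the radius-R hemisphere at height z equals that of the unit hemisphere at height z / R,
  so A_R does not depend on R. Hence -G_R = -A_R - 2 c_o J R tends to minus infinity as R grows,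
  and no admissible disc minimises -G_R.

  The boundary term of the truncated area is the arclength integral over a horizontal circle. A
  simple closed regular parametrisation of a circle has winding number +-1 about its centre, so
  its length is the circumference, whatever the parametrisation.\<close>

lemma norm_vec3: "norm (x::real^3) = sqrt ((x$1)\<^sup>2 + (x$2)\<^sup>2 + (x$3)\<^sup>2)"
  by (simp add: norm_vec_def L2_set_def sum_3)

lemma norm_vec3_eq_iff:
  assumes "R \<ge> 0"
  shows "norm (q::real^3) = R \<longleftrightarrow> (q$1)\<^sup>2 + (q$2)\<^sup>2 + (q$3)\<^sup>2 = R\<^sup>2"
proof
  assume "norm q = R"
  then show "(q$1)\<^sup>2 + (q$2)\<^sup>2 + (q$3)\<^sup>2 = R\<^sup>2"
    unfolding norm_vec3 by (metis real_sqrt_pow2 sum_power2_ge_zero add_nonneg_nonneg zero_le_power2)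
next
  assume "(q$1)\<^sup>2 + (q$2)\<^sup>2 + (q$3)\<^sup>2 = R\<^sup>2"
  then show "norm q = R"
    unfolding norm_vec3 using assms by (simp add: real_sqrt_unique)
qed

lemma norm_vec2_square: "(norm (u::real^2))\<^sup>2 = u$1 * u$1 + u$2 * u$2"
  by (simp add: norm_vec_def L2_set_def sum_2 power2_eq_square)

lemma has_derivative_vec_nth [derivative_intros]:
  "(f has_derivative f') F \<Longrightarrow> ((\<lambda>x. f x $ i) has_derivative (\<lambda>h. f' h $ i)) F"
  by (rule bounded_linear.has_derivative[OF bounded_linear_vec_nth])

lemma Lim_at_right_0_rescale:
  fixes f :: "real \<Rightarrow> 'a::t2_space"
  assumes "c > 0"
  shows "Lim (at_right 0) (\<lambda>x. f (x / c)) = Lim (at_right 0) f"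
proof -
  have "(\<lambda>x. x / c) = times (inverse c)"
    by (simp add: fun_eq_iff divide_inverse mult.commute)
  then have "filtermap (\<lambda>x. x / c) (at_right (0::real)) = at_right 0"
    using filtermap_times_pos_at_right[of "inverse c" 0] assms by simp
  then have "((\<lambda>x. f (x / c)) \<longlongrightarrow> l) (at_right 0) \<longleftrightarrow> (f \<longlongrightarrow> l) (at_right 0)" for l
    using filterlim_filtermap[of f "nhds l" "\<lambda>x. x / c" "at_right 0"] by simp
  then show ?thesis
    unfolding t2_space_class.Lim_def by simp
qed

section \<open>Length of a simple closed curve on a circle\<close>

lemma continuous_nonvanishing_sign_cases:
  fixes f :: "real \<Rightarrow> real"
  assumes "continuous_on {a..b} f" and "\<And>t. t \<in> {a..b} \<Longrightarrow> f t \<noteq> 0"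
  shows "(\<forall>t\<in>{a..b}. 0 < f t) \<or> (\<forall>t\<in>{a..b}. f t < 0)"
proof (rule ccontr)
  assume "\<not> ?thesis"
  then obtain s t where s: "s \<in> {a..b}" "f s \<le> 0" and t: "t \<in> {a..b}" "0 \<le> f t"
    by (meson not_less)
  have "connected (f ` {a..b})"
    using assms(1) by (rule connected_continuous_image) simp
  moreover have "f s \<in> f ` {a..b}" "f t \<in> f ` {a..b}"
    using s t by (simp_all add: image_eqI)
  ultimately have "0 \<in> f ` {a..b}"
    using connectedD_interval s(2) t(2) by blast
  then show False using assms(2) by (auto simp: image_iff)
qed

lemma integral_abs_continuous_nonvanishing:
  fixes f :: "real \<Rightarrow> real"
  assumes "a < b" and cont: "continuous_on {a..b} f" and nz: "\<And>t. t \<in> {a..b} \<Longrightarrow> f t \<noteq> 0"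
  shows "integral {a..b} (\<lambda>t. \<bar>f t\<bar>) = \<bar>integral {a..b} f\<bar>" and "integral {a..b} f \<noteq> 0"
proof -
  have "integral {a..b} (\<lambda>t. \<bar>f t\<bar>) = \<bar>integral {a..b} f\<bar> \<and> integral {a..b} f \<noteq> 0"
    using continuous_nonvanishing_sign_cases[OF cont nz]
  proof
    assume pos: "\<forall>t\<in>{a..b}. 0 < f t"
    have "integral {a..b} (\<lambda>t. \<bar>f t\<bar>) = integral {a..b} f"
      using pos by (intro integral_cong) (simp add: less_imp_le)
    moreover have "integral {a..b} (\<lambda>_. 0) < integral {a..b} f"
      using pos \<open>a < b\<close> by (intro integral_less_real cont) simp_all
    ultimately show ?thesis by simp
  next
    assume neg: "\<forall>t\<in>{a..b}. f t < 0"
    have "integral {a..b} (\<lambda>t. \<bar>f t\<bar>) = integral {a..b} (\<lambda>t. - f t)"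
      using neg by (intro integral_cong) (simp add: less_imp_le)
    moreover have "integral {a..b} f < integral {a..b} (\<lambda>_. 0)"
      using neg \<open>a < b\<close> by (intro integral_less_real cont) simp_all
    ultimately show ?thesis by simp
  qed
  then show "integral {a..b} (\<lambda>t. \<bar>f t\<bar>) = \<bar>integral {a..b} f\<bar>" and "integral {a..b} f \<noteq> 0"
    by simp_all
qed

lemma has_vector_derivative_constant_on_interval:
  fixes g :: "real \<Rightarrow> 'a::euclidean_space"
  assumes "a < b" and t: "t \<in> {a..b}" and "(g has_vector_derivative d) (at t within {a..b})"
    and const: "\<And>s. s \<in> {a..b} \<Longrightarrow> g s = k"
  shows "d = 0"
proof -
  have "(g has_vector_derivative 0) (at t within {a..b})"
    by (rule has_vector_derivative_transform_within[OF has_vector_derivative_const zero_less_one t])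
       (simp add: const)
  then show ?thesis
    using assms(1-3) vector_derivative_within_closed_interval by metis
qed

lemma unit_circle_path_derivative:
  fixes \<beta> :: "real \<Rightarrow> complex"
  assumes "a < b" and t: "t \<in> {a..b}" and on_circle: "\<And>s. s \<in> {a..b} \<Longrightarrow> norm (\<beta> s) = 1"
    and der: "(\<beta> has_vector_derivative B) (at t within {a..b})"
  shows "B = \<i> * of_real (Im (B * cnj (\<beta> t))) * \<beta> t"
proof -
  have unit: "\<beta> s * cnj (\<beta> s) = 1" if "s \<in> {a..b}" for s
    using on_circle[OF that] complex_norm_square[of "\<beta> s"] by simp
  have "((\<lambda>s. \<beta> s * cnj (\<beta> s)) has_vector_derivative \<beta> t * cnj B + B * cnj (\<beta> t)) (at t within {a..b})"
    by (rule has_vector_derivative_mult[OF der has_vector_derivative_cnj[OF der]])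
  then have "\<beta> t * cnj B + B * cnj (\<beta> t) = 0"
    by (rule has_vector_derivative_constant_on_interval[OF \<open>a < b\<close> t _ unit])
  then have "B * cnj (\<beta> t) = \<i> * of_real (Im (B * cnj (\<beta> t)))"
    by (simp add: complex_eq_iff)
  moreover have "B = B * cnj (\<beta> t) * \<beta> t"
    using unit[OF t] by (metis mult.assoc mult.commute mult.right_neutral)
  ultimately show ?thesis by metis
qed

lemma simple_closed_unit_circle_path_length:
  fixes \<beta> B :: "real \<Rightarrow> complex"
  assumes der: "\<And>t. t \<in> {0..1} \<Longrightarrow> (\<beta> has_vector_derivative B t) (at t)"
    and cont_B: "continuous_on {0..1} B" and B_nz: "\<And>t. t \<in> {0..1} \<Longrightarrow> B t \<noteq> 0"
    and on_circle: "\<And>t. t \<in> {0..1} \<Longrightarrow> norm (\<beta> t) = 1"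
    and simple: "simple_path \<beta>" and closed: "pathfinish \<beta> = pathstart \<beta>"
  shows "integral {0..1} (\<lambda>t. norm (B t)) = 2 * pi"
proof -
  define \<omega> where "\<omega> t = Im (B t * cnj (\<beta> t))" for t
  have der_within: "(\<beta> has_vector_derivative B t) (at t within {0..1})" if "t \<in> {0..1}" for t
    using der[OF that] by (rule has_vector_derivative_at_within)
  have B_eq: "B t = \<i> * of_real (\<omega> t) * \<beta> t" if "t \<in> {0..1}" for t
    unfolding \<omega>_def using that on_circle der_within[OF that]
    by (rule unit_circle_path_derivative[OF zero_less_one])
  have norm_B: "norm (B t) = \<bar>\<omega> t\<bar>" if "t \<in> {0..1}" for t
    using B_eq[OF that] on_circle[OF that] by (simp add: norm_mult)
  have cont_\<omega>: "continuous_on {0..1} \<omega>"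
    unfolding \<omega>_def using simple_path_imp_path[OF simple]
    by (intro continuous_intros cont_B) (simp add: path_def)
  have \<omega>_nz: "\<omega> t \<noteq> 0" if "t \<in> {0..1}" for t
    using norm_B[OF that] B_nz[OF that] by auto
  define I where "I = integral {0..1} \<omega>"
  have "((\<lambda>t. \<i> * of_real (\<omega> t)) has_integral \<i> * of_real I) {0..1}"
    unfolding I_def
    by (intro has_integral_mult_right has_integral_of_real integrable_integral
        integrable_continuous_interval cont_\<omega>)
  then have contour: "((\<lambda>z. 1 / (z - 0)) has_contour_integral \<i> * of_real I) \<beta>"
    unfolding has_contour_integral_def
  proof (rule has_integral_eq[rotated])
    fix t :: real assume t: "t \<in> {0..1}"
    have "vector_derivative \<beta> (at t within {0..1}) = B t"
      using der_within[OF t] t by (intro vector_derivative_within_closed_interval) auto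
    then show "\<i> * of_real (\<omega> t) = 1 / (\<beta> t - 0) * vector_derivative \<beta> (at t within {0..1})"
      using B_eq[OF t] on_circle[OF t] by auto
  qed
  have valid: "valid_path \<beta>"
    unfolding valid_path_def C1_differentiable_on_def using der cont_B
    by (intro C1_differentiable_imp_piecewise) (auto simp: C1_differentiable_on_def intro!: exI[of _ B])
  have zero_notin: "0 \<notin> path_image \<beta>"
    using on_circle by (auto simp: path_image_def) (metis norm_zero zero_neq_one)
  have "winding_number \<beta> 0 = of_real (I / (2 * pi))"
    using winding_number_valid_path[OF valid zero_notin] contour_integral_unique[OF contour] by simp
  then have "I / (2 * pi) \<in> {-1, 0, 1}"
    using simple_closed_path_winding_number_cases[OF simple closed zero_notin] by (auto simp: complex_eq_iff)
  moreover have "I \<noteq> 0"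
    unfolding I_def using cont_\<omega> \<omega>_nz by (rule integral_abs_continuous_nonvanishing(2)[OF zero_less_one])
  ultimately have abs_I: "\<bar>I\<bar> = 2 * pi"
    using pi_gt_zero by (auto simp: divide_eq_eq)
  have "integral {0..1} (\<lambda>t. norm (B t)) = integral {0..1} (\<lambda>t. \<bar>\<omega> t\<bar>)"
    using norm_B by (intro integral_cong) simp
  also have "\<dots> = \<bar>I\<bar>"
    unfolding I_def by (rule integral_abs_continuous_nonvanishing(1)[OF zero_less_one cont_\<omega> \<omega>_nz])
  finally show ?thesis using abs_I by simp
qed

definition horizontal_circle :: "real \<Rightarrow> real \<Rightarrow> (real^3) set" where
  "horizontal_circle h \<rho> = {q. q$3 = h \<and> (q$1)\<^sup>2 + (q$2)\<^sup>2 = \<rho>\<^sup>2}"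

definition horizontal_proj :: "real^3 \<Rightarrow> complex" where
  "horizontal_proj q = Complex (q$1) (q$2)"

definition horizontal_embed :: "complex \<Rightarrow> real^3" where
  "horizontal_embed z = Re z *\<^sub>R axis 1 1 + Im z *\<^sub>R axis 2 1"

lemma horizontal_embed_nth [simp]:
  "horizontal_embed z $ 1 = Re z" "horizontal_embed z $ 2 = Im z" "horizontal_embed z $ 3 = 0"
  by (simp_all add: horizontal_embed_def axis_def)

lemma bounded_linear_horizontal_proj: "bounded_linear horizontal_proj"
  unfolding horizontal_proj_def
  by (rule bounded_linear_intro[of _ 1]) (simp_all add: norm_vec3 cmod_def complex_eq_iff)

lemma linear_horizontal_embed: "linear horizontal_embed"
  by (rule linearI) (simp_all add: vec_eq_iff forall_3)

lemma horizontal_embed_proj: "q$3 = 0 \<Longrightarrow> horizontal_embed (horizontal_proj q) = q"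
  by (simp add: horizontal_proj_def vec_eq_iff forall_3)

lemma norm_horizontal_embed [simp]: "norm (horizontal_embed z) = norm z"
  by (simp add: norm_vec3 cmod_def)

lemma norm_horizontal_proj: "q$3 = 0 \<Longrightarrow> norm (horizontal_proj q) = norm q"
  using norm_horizontal_embed[of "horizontal_proj q"] by (simp add: horizontal_embed_proj)

lemma inj_horizontal_embed: "inj horizontal_embed"
  by (rule injI) (simp add: vec_eq_iff forall_3 complex_eq_iff)

lemma norm_horizontal_proj_circle:
  "\<rho> \<ge> 0 \<Longrightarrow> q \<in> horizontal_circle h \<rho> \<Longrightarrow> norm (horizontal_proj q) = \<rho>"
  by (simp add: horizontal_circle_def horizontal_proj_def cmod_def)

lemma inj_on_horizontal_proj_circle: "inj_on horizontal_proj (horizontal_circle h \<rho>)"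
  by (rule inj_onI) (simp add: horizontal_circle_def horizontal_proj_def complex_eq_iff vec_eq_iff forall_3)

lemma length_simple_closed_curve_on_horizontal_circle:
  fixes \<gamma> :: "real \<Rightarrow> real^3"
  assumes \<rho>: "\<rho> > 0" and simple: "simple_path \<gamma>" and closed: "pathfinish \<gamma> = pathstart \<gamma>"
    and C1: "\<gamma> C1_differentiable_on {0..1}"
    and regular: "\<And>t. t \<in> {0..1} \<Longrightarrow> vector_derivative \<gamma> (at t within {0..1}) \<noteq> 0"
    and image: "path_image \<gamma> = horizontal_circle h \<rho>"
  shows "integral {0..1} (\<lambda>t. norm (vector_derivative \<gamma> (at t within {0..1}))) = 2 * pi * \<rho>"
proof -
  obtain D where D: "\<And>t. t \<in> {0..1} \<Longrightarrow> (\<gamma> has_vector_derivative D t) (at t)"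
    and cont_D: "continuous_on {0..1} D"
    using C1 unfolding C1_differentiable_on_def by blast
  have vd: "vector_derivative \<gamma> (at t within {0..1}) = D t" if "t \<in> {0..1}" for t
    using that D[OF that] by (intro vector_derivative_at_within_ivl) auto
  have on_circle: "\<gamma> t \<in> horizontal_circle h \<rho>" if "t \<in> {0..1}" for t
    using image that by (auto simp: path_image_def)
  have D3: "D t $ 3 = 0" if t: "t \<in> {0..1}" for t
    using zero_less_one t
      has_vector_derivative_at_within[OF bounded_linear.has_vector_derivative[OF bounded_linear_vec_nth D[OF t]]]
  proof (rule has_vector_derivative_constant_on_interval)
    show "\<gamma> s $ 3 = h" if "s \<in> {0..1}" for s
      using on_circle[OF that] by (simp add: horizontal_circle_def)
  qed
  define P where "P q = horizontal_proj q /\<^sub>R \<rho>" for q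
  have P: "bounded_linear P"
    unfolding P_def[abs_def]
    by (rule bounded_linear_compose[OF bounded_linear_scaleR_right bounded_linear_horizontal_proj])
  have "integral {0..1} (\<lambda>t. norm (P (D t))) = 2 * pi"
  proof (rule simple_closed_unit_circle_path_length)
    show "((P \<circ> \<gamma>) has_vector_derivative P (D t)) (at t)" if "t \<in> {0..1}" for t
      using bounded_linear.has_vector_derivative[OF P D[OF that]] by (simp add: o_def)
    show "continuous_on {0..1} (\<lambda>t. P (D t))"
      using linear_continuous_on_compose[OF cont_D bounded_linear.linear[OF P]] .
    show "P (D t) \<noteq> 0" if "t \<in> {0..1}" for t
    proof -
      have "norm (P (D t)) = norm (D t) / \<rho>"
        using D3[OF that] \<rho> by (simp add: P_def norm_horizontal_proj divide_inverse mult.commute)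
      moreover have "D t \<noteq> 0"
        using regular[OF that] vd[OF that] by simp
      ultimately show ?thesis
        using \<rho> by (metis divide_eq_0_iff norm_eq_zero less_irrefl)
    qed
    show "norm ((P \<circ> \<gamma>) t) = 1" if "t \<in> {0..1}" for t
      using norm_horizontal_proj_circle[OF _ on_circle[OF that]] \<rho> by (simp add: P_def)
    show "simple_path (P \<circ> \<gamma>)"
    proof (rule simple_path_continuous_image[OF simple])
      show "continuous_on (path_image \<gamma>) P"
        using P by (simp add: linear_continuous_on)
      show "inj_on P (path_image \<gamma>)"
        using inj_on_horizontal_proj_circle \<rho> unfolding image by (auto simp: P_def inj_on_def)
    qed
    show "pathfinish (P \<circ> \<gamma>) = pathstart (P \<circ> \<gamma>)"
      using closed by (simp add: pathfinish_compose pathstart_compose)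
  qed
  moreover have "norm (vector_derivative \<gamma> (at t within {0..1})) = \<rho> * norm (P (D t))" if "t \<in> {0..1}" for t
    using vd[OF that] D3[OF that] \<rho> by (simp add: P_def norm_horizontal_proj)
  then have "integral {0..1} (\<lambda>t. norm (vector_derivative \<gamma> (at t within {0..1})))
      = integral {0..1} (\<lambda>t. \<rho> * norm (P (D t)))"
    by (intro integral_cong) simp
  ultimately show ?thesis
    by simp
qed

definition horizontal_circlepath :: "real \<Rightarrow> real \<Rightarrow> real \<Rightarrow> real^3" where
  "horizontal_circlepath h \<rho> t = h *\<^sub>R axis 3 1 + horizontal_embed (circlepath 0 \<rho> t)"

lemma horizontal_circlepath_eq:
  "horizontal_circlepath h \<rho> = (\<lambda>x. h *\<^sub>R axis 3 1 + x) \<circ> (horizontal_embed \<circ> circlepath 0 \<rho>)"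
  by (simp add: horizontal_circlepath_def[abs_def] o_def)

lemma simple_path_horizontal_circlepath: "\<rho> > 0 \<Longrightarrow> simple_path (horizontal_circlepath h \<rho>)"
  unfolding horizontal_circlepath_eq
  by (simp add: simple_path_translation_eq simple_path_circlepath
      simple_path_linear_image_eq[OF linear_horizontal_embed inj_horizontal_embed])

lemma pathfinish_horizontal_circlepath:
  "pathfinish (horizontal_circlepath h \<rho>) = pathstart (horizontal_circlepath h \<rho>)"
  unfolding horizontal_circlepath_eq by (simp add: pathfinish_compose pathstart_compose)

lemma path_image_horizontal_circlepath:
  assumes "\<rho> > 0"
  shows "path_image (horizontal_circlepath h \<rho>) = horizontal_circle h \<rho>"
proof -
  have "path_image (horizontal_circlepath h \<rho>) = (\<lambda>x. h *\<^sub>R axis 3 1 + x) ` horizontal_embed ` sphere 0 \<rho>"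
    unfolding horizontal_circlepath_eq using assms by (simp add: path_image_compose)
  also have "\<dots> = horizontal_circle h \<rho>"
  proof (intro equalityI subsetI)
    fix q assume "q \<in> (\<lambda>x. h *\<^sub>R axis 3 1 + x) ` horizontal_embed ` sphere 0 \<rho>"
    then obtain z where "norm z = \<rho>" "q = h *\<^sub>R axis 3 1 + horizontal_embed z"
      by auto
    then show "q \<in> horizontal_circle h \<rho>"
      by (simp add: horizontal_circle_def axis_def cmod_power2[symmetric])
  next
    fix q assume q: "q \<in> horizontal_circle h \<rho>"
    then have "horizontal_embed (horizontal_proj (q - h *\<^sub>R axis 3 1)) = q - h *\<^sub>R axis 3 1"
      by (intro horizontal_embed_proj) (simp add: horizontal_circle_def axis_def)
    moreover have "norm (horizontal_proj (q - h *\<^sub>R axis 3 1)) = \<rho>"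
      using q assms by (simp add: horizontal_circle_def horizontal_proj_def axis_def cmod_def)
    ultimately have "q - h *\<^sub>R axis 3 1 \<in> horizontal_embed ` sphere 0 \<rho>"
      by (metis image_eqI mem_sphere_0)
    then show "q \<in> (\<lambda>x. h *\<^sub>R axis 3 1 + x) ` horizontal_embed ` sphere 0 \<rho>"
      by (rule image_eqI[rotated]) simp
  qed
  finally show ?thesis .
qed

lemma has_vector_derivative_horizontal_circlepath:
  "(horizontal_circlepath h \<rho> has_vector_derivative
     horizontal_embed (2 * pi * \<i> * \<rho> * exp (2 * of_real pi * \<i> * t))) (at t)"
proof -
  have "bounded_linear horizontal_embed"
    using linear_horizontal_embed by (simp add: linear_conv_bounded_linear)
  from bounded_linear.has_vector_derivative[OF this has_vector_derivative_circlepath]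
  show ?thesis
    unfolding horizontal_circlepath_def[abs_def]
    using has_vector_derivative_add[OF has_vector_derivative_const] by fastforce
qed

lemma vector_derivative_horizontal_circlepath:
  "t \<in> {0..1} \<Longrightarrow> vector_derivative (horizontal_circlepath h \<rho>) (at t within {0..1})
     = horizontal_embed (2 * pi * \<i> * \<rho> * exp (2 * of_real pi * \<i> * t))"
  using has_vector_derivative_horizontal_circlepath by (intro vector_derivative_at_within_ivl) auto

lemma C1_differentiable_horizontal_circlepath: "horizontal_circlepath h \<rho> C1_differentiable_on {0..1}"
proof -
  have "continuous_on {0..1} (\<lambda>t::real. horizontal_embed (2 * pi * \<i> * \<rho> * exp (2 * of_real pi * \<i> * t)))"
    unfolding horizontal_embed_def by (intro continuous_intros)
  then show ?thesis
    unfolding C1_differentiable_on_def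
    by (intro exI[of _ "\<lambda>t::real. horizontal_embed (2 * pi * \<i> * \<rho> * exp (2 * of_real pi * \<i> * t))"]
        conjI ballI has_vector_derivative_horizontal_circlepath)
qed

lemma line_int_horizontal_circle:
  assumes \<rho>: "\<rho> > 0" and const: "\<And>q. q \<in> horizontal_circle h \<rho> \<Longrightarrow> f q = c"
  shows "line_int (horizontal_circle h \<rho>) f = 2 * pi * \<rho> * c"
proof -
  have integral: "integral {0..1} (\<lambda>t. f (\<gamma> t) * norm (vector_derivative \<gamma> (at t within {0..1})))
      = 2 * pi * \<rho> * c"
    if "simple_path \<gamma>" "pathfinish \<gamma> = pathstart \<gamma>" "\<gamma> C1_differentiable_on {0..1}"
      "\<And>t. t \<in> {0..1} \<Longrightarrow> vector_derivative \<gamma> (at t within {0..1}) \<noteq> 0"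
      and image: "path_image \<gamma> = horizontal_circle h \<rho>"
    for \<gamma> :: "real \<Rightarrow> real^3"
  proof -
    have "f (\<gamma> t) = c" if "t \<in> {0..1}" for t
      using const image that unfolding path_image_def by blast
    then have "integral {0..1} (\<lambda>t. f (\<gamma> t) * norm (vector_derivative \<gamma> (at t within {0..1})))
        = integral {0..1} (\<lambda>t. c * norm (vector_derivative \<gamma> (at t within {0..1})))"
      by (intro integral_cong) simp
    then show ?thesis
      using length_simple_closed_curve_on_horizontal_circle[OF \<rho> that] by simp
  qed
  define \<gamma> where "\<gamma> = horizontal_circlepath h \<rho>"
  have simple: "simple_path \<gamma>" and closed: "pathfinish \<gamma> = pathstart \<gamma>"
    and C1: "\<gamma> C1_differentiable_on {0..1}" and image: "path_image \<gamma> = horizontal_circle h \<rho>"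
    unfolding \<gamma>_def using \<rho>
    by (simp_all add: simple_path_horizontal_circlepath pathfinish_horizontal_circlepath
        C1_differentiable_horizontal_circlepath path_image_horizontal_circlepath)
  have regular: "vector_derivative \<gamma> (at t within {0..1}) \<noteq> 0" if "t \<in> {0..1}" for t
  proof -
    have "norm (vector_derivative \<gamma> (at t within {0..1})) > 0"
      unfolding \<gamma>_def using that \<rho> by (simp add: vector_derivative_horizontal_circlepath norm_mult)
    then show ?thesis
      by (metis norm_zero less_irrefl)
  qed
  show ?thesis
    unfolding line_int_def
  proof (rule the_equality)
    show "\<exists>\<gamma>::real \<Rightarrow> real^3. simple_path \<gamma> \<and> pathfinish \<gamma> = pathstart \<gamma> \<and>
        \<gamma> C1_differentiable_on {0..1} \<and>
        (\<forall>t\<in>{0..1}. vector_derivative \<gamma> (at t within {0..1}) \<noteq> 0) \<and>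
        path_image \<gamma> = horizontal_circle h \<rho> \<and>
        2 * pi * \<rho> * c = integral {0..1} (\<lambda>t. f (\<gamma> t) * norm (vector_derivative \<gamma> (at t within {0..1})))"
      using simple closed C1 regular image integral[OF simple closed C1 regular image] by auto
  qed (use integral in blast)
qed

section \<open>Rational maps are smooth\<close>

lemma smooth_on_open_UNIV_by_derivative_closure:
  assumes "P f"
    and closed: "\<And>g. P g \<Longrightarrow> (\<forall>x. g differentiable at x) \<and> (\<forall>v. P (\<lambda>x. frechet_derivative g (at x) v))"
  shows "smooth_on_open f UNIV"
proof -
  have "P (iter_dderiv vs f)" for vs
    by (induction vs) (use assms in auto)
  then show ?thesis
    unfolding smooth_on_open_def using closed
    by (auto simp: differentiable_on_def intro: differentiable_at_withinI)
qed

inductive rational_fun :: "(real^'n \<Rightarrow> real) \<Rightarrow> bool" where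
  const: "rational_fun (\<lambda>x. c)"
| coord: "rational_fun (\<lambda>x. x $ i)"
| add: "rational_fun f \<Longrightarrow> rational_fun g \<Longrightarrow> rational_fun (\<lambda>x. f x + g x)"
| mult: "rational_fun f \<Longrightarrow> rational_fun g \<Longrightarrow> rational_fun (\<lambda>x. f x * g x)"
| inverse: "rational_fun f \<Longrightarrow> (\<forall>x. f x \<noteq> 0) \<Longrightarrow> rational_fun (\<lambda>x. inverse (f x))"

lemma rational_fun_minus: "rational_fun f \<Longrightarrow> rational_fun (\<lambda>x. - f x)"
  using rational_fun.mult[OF rational_fun.const[of "-1"]] by simp

lemma derivative_closure_intro:
  assumes "\<And>x. (F has_derivative D x) (at x)" and "\<And>v. P (\<lambda>x. D x v)"
  shows "(\<forall>x. F differentiable at x) \<and> (\<forall>v. P (\<lambda>x. frechet_derivative F (at x) v))"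
proof -
  have "frechet_derivative F (at x) = D x" for x
    using assms(1) by (rule frechet_derivative_at[symmetric])
  then show ?thesis
    using assms by (auto simp: differentiable_def)
qed

lemma rational_fun_derivative:
  "rational_fun f \<Longrightarrow> (\<forall>x. f differentiable at x) \<and> (\<forall>v. rational_fun (\<lambda>x. frechet_derivative f (at x) v))"
proof (induction rule: rational_fun.induct)
  case (const c)
  show ?case
    by (rule derivative_closure_intro[where D="\<lambda>_ _. 0"]) (simp_all add: rational_fun.const)
next
  case (coord i)
  show ?case
    by (rule derivative_closure_intro[where D="\<lambda>_ h. h $ i"])
       (auto intro: bounded_linear_imp_has_derivative bounded_linear_vec_nth rational_fun.const)
next
  case (add f g)
  show ?case
    using add.IH
    by (intro derivative_closure_intro[where D="\<lambda>x h. frechet_derivative f (at x) h + frechet_derivative g (at x) h"]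
        has_derivative_add rational_fun.add)
       (auto simp: frechet_derivative_works[symmetric])
next
  case (mult f g)
  show ?case
    using mult.IH mult.hyps
    by (intro derivative_closure_intro[where
          D="\<lambda>x h. f x * frechet_derivative g (at x) h + frechet_derivative f (at x) h * g x"]
        has_derivative_mult rational_fun.add rational_fun.mult)
       (auto simp: frechet_derivative_works[symmetric])
next
  case (inverse f)
  show ?case
    using inverse.IH inverse.hyps rational_fun.inverse[OF inverse.hyps]
    by (intro derivative_closure_intro[where
          D="\<lambda>x h. - (inverse (f x) * frechet_derivative f (at x) h * inverse (f x))"]
        Deriv.has_derivative_inverse rational_fun_minus rational_fun.mult)
       (auto simp: frechet_derivative_works[symmetric])
qed

inductive rational_map :: "(real^'n \<Rightarrow> 'b::real_normed_vector) \<Rightarrow> bool" where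
  scale: "rational_fun f \<Longrightarrow> rational_map (\<lambda>x. f x *\<^sub>R w)"
| add: "rational_map f \<Longrightarrow> rational_map g \<Longrightarrow> rational_map (\<lambda>x. f x + g x)"

lemma rational_map_derivative:
  "rational_map f \<Longrightarrow> (\<forall>x. f differentiable at x) \<and> (\<forall>v. rational_map (\<lambda>x. frechet_derivative f (at x) v))"
proof (induction rule: rational_map.induct)
  case (scale f w)
  show ?case
    using rational_fun_derivative[OF scale]
    by (intro derivative_closure_intro[where D="\<lambda>x h. frechet_derivative f (at x) h *\<^sub>R w"]
        has_derivative_scaleR_left rational_map.scale)
       (auto simp: frechet_derivative_works[symmetric])
next
  case (add f g)
  show ?case
    using add.IH
    by (intro derivative_closure_intro[where D="\<lambda>x h. frechet_derivative f (at x) h + frechet_derivative g (at x) h"]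
        has_derivative_add rational_map.add)
       (auto simp: frechet_derivative_works[symmetric])
qed

lemma smooth_on_open_rational_fun: "rational_fun f \<Longrightarrow> smooth_on_open f UNIV"
  by (rule smooth_on_open_UNIV_by_derivative_closure[of rational_fun, OF _ rational_fun_derivative])

lemma smooth_on_open_rational_map: "rational_map f \<Longrightarrow> smooth_on_open f UNIV"
  by (rule smooth_on_open_UNIV_by_derivative_closure[of rational_map, OF _ rational_map_derivative])

section \<open>Inverse stereographic projection\<close>

definition stereo_denom :: "real^2 \<Rightarrow> real" where
  "stereo_denom u = 1 + u$1 * u$1 + u$2 * u$2"

lemma stereo_denom_eq: "stereo_denom u = 1 + (norm u)\<^sup>2"
  by (simp add: stereo_denom_def norm_vec2_square)

lemma stereo_denom_pos: "stereo_denom u > 0"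
  by (simp add: stereo_denom_eq add_pos_nonneg)

lemma stereo_denom_nonzero [simp]: "stereo_denom u \<noteq> 0"
  using stereo_denom_pos[of u] by linarith

definition inv_stereo :: "real^2 \<Rightarrow> real^3" where
  "inv_stereo u = (2 * u$1 / stereo_denom u) *\<^sub>R axis 1 1 + (2 * u$2 / stereo_denom u) *\<^sub>R axis 2 1
     + ((1 - u$1 * u$1 - u$2 * u$2) / stereo_denom u) *\<^sub>R axis 3 1"

lemma inv_stereo_nth [simp]:
  "inv_stereo u $ 1 = 2 * u$1 / stereo_denom u" "inv_stereo u $ 2 = 2 * u$2 / stereo_denom u"
  "inv_stereo u $ 3 = (1 - u$1 * u$1 - u$2 * u$2) / stereo_denom u"
  by (simp_all add: inv_stereo_def axis_def)

lemma inv_stereo_3: "inv_stereo u $ 3 = (1 - (norm u)\<^sup>2) / (1 + (norm u)\<^sup>2)"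
  by (simp add: stereo_denom_eq norm_vec2_square algebra_simps)

lemma inv_stereo_3_eq: "inv_stereo u $ 3 = 2 / stereo_denom u - 1"
  using stereo_denom_pos[of u] by (simp add: stereo_denom_def field_simps)

lemma inv_stereo_3_pos_iff: "inv_stereo u $ 3 > 0 \<longleftrightarrow> norm u < 1"
  using add_pos_nonneg[OF zero_less_one zero_le_power2[of "norm u"]]
  unfolding inv_stereo_3 by (simp add: zero_less_divide_iff abs_square_less_1)

lemma inv_stereo_3_nonneg_iff: "inv_stereo u $ 3 \<ge> 0 \<longleftrightarrow> norm u \<le> 1"
  using add_pos_nonneg[OF zero_less_one zero_le_power2[of "norm u"]]
  unfolding inv_stereo_3 by (simp add: zero_le_divide_iff abs_square_le_1)

lemma inv_stereo_3_eq_0_iff: "inv_stereo u $ 3 = 0 \<longleftrightarrow> norm u = 1"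
  using add_pos_nonneg[OF zero_less_one zero_le_power2[of "norm u"]]
  unfolding inv_stereo_3 by (simp add: abs_square_eq_1)

lemma norm_inv_stereo [simp]: "norm (inv_stereo u) = 1"
proof -
  have "(2 * u$1)\<^sup>2 + (2 * u$2)\<^sup>2 + (1 - u$1 * u$1 - u$2 * u$2)\<^sup>2 = (stereo_denom u)\<^sup>2"
    unfolding stereo_denom_def by algebra
  then have "(inv_stereo u $ 1)\<^sup>2 + (inv_stereo u $ 2)\<^sup>2 + (inv_stereo u $ 3)\<^sup>2 = 1"
    by (simp add: power_divide add_divide_distrib[symmetric])
  then show ?thesis
    by (simp add: norm_vec3 del: inv_stereo_nth)
qed

lemma inj_inv_stereo: "inj inv_stereo"
proof (rule injI)
  fix u v assume eq: "inv_stereo u = inv_stereo v"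
  have denom: "stereo_denom u = stereo_denom v"
    using arg_cong[OF eq, of "\<lambda>q. q $ 3"] unfolding inv_stereo_3_eq by simp
  have "inv_stereo u $ 1 = inv_stereo v $ 1" "inv_stereo u $ 2 = inv_stereo v $ 2"
    using eq by simp_all
  then show "u = v"
    using denom by (simp add: vec_eq_iff forall_2)
qed

lemma inv_stereo_onto_upper_hemisphere:
  fixes q :: "real^3"
  assumes "norm q = 1" and "q$3 \<ge> 0"
  obtains u where "norm u \<le> 1" and "inv_stereo u = q"
proof -
  have sq: "(q$1)\<^sup>2 + (q$2)\<^sup>2 + (q$3)\<^sup>2 = 1"
    using assms(1) by (simp add: norm_vec3)
  define t where "t = 1 + q$3"
  have t: "t > 0"
    using assms(2) by (simp add: t_def)
  define u :: "real^2" where "u = vector [q$1 / t, q$2 / t]"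
  have u1: "u$1 = q$1 / t" and u2: "u$2 = q$2 / t"
    by (simp_all add: u_def)
  have norm_u: "(norm u)\<^sup>2 = (1 - q$3) / t"
  proof -
    have "(norm u)\<^sup>2 = ((q$1)\<^sup>2 + (q$2)\<^sup>2) / t\<^sup>2"
      unfolding norm_vec2_square by (simp add: u1 u2 power2_eq_square add_divide_distrib)
    also have "(q$1)\<^sup>2 + (q$2)\<^sup>2 = (1 - q$3) * t"
      using sq by (simp add: t_def algebra_simps power2_eq_square)
    finally show ?thesis
      using t by (simp add: power2_eq_square)
  qed
  have denom: "stereo_denom u = 2 / t"
    using t by (simp add: stereo_denom_eq norm_u field_simps t_def)
  have "inv_stereo u $ 3 = q$3"
    unfolding inv_stereo_3 norm_u using t by (simp add: field_simps t_def del: inv_stereo_nth)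
  then have "inv_stereo u = q"
    using t by (simp add: vec_eq_iff forall_3 denom u1 u2 field_simps)
  moreover have "(norm u)\<^sup>2 \<le> 1"
    using t assms(2) unfolding norm_u by (simp add: t_def divide_le_eq)
  then have "norm u \<le> 1"
    using abs_square_le_1[of "norm u"] by simp
  ultimately show ?thesis
    using that by blast
qed

definition inv_stereo_deriv :: "real^2 \<Rightarrow> real^2 \<Rightarrow> real^3" where
  "inv_stereo_deriv u h =
     (2 * h$1 / stereo_denom u - 4 * u$1 * (u$1 * h$1 + u$2 * h$2) / (stereo_denom u)\<^sup>2) *\<^sub>R axis 1 1
     + (2 * h$2 / stereo_denom u - 4 * u$2 * (u$1 * h$1 + u$2 * h$2) / (stereo_denom u)\<^sup>2) *\<^sub>R axis 2 1
     + (- 4 * (u$1 * h$1 + u$2 * h$2) / (stereo_denom u)\<^sup>2) *\<^sub>R axis 3 1"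

lemma inv_stereo_deriv_nth [simp]:
  "inv_stereo_deriv u h $ 1 = 2 * h$1 / stereo_denom u - 4 * u$1 * (u$1 * h$1 + u$2 * h$2) / (stereo_denom u)\<^sup>2"
  "inv_stereo_deriv u h $ 2 = 2 * h$2 / stereo_denom u - 4 * u$2 * (u$1 * h$1 + u$2 * h$2) / (stereo_denom u)\<^sup>2"
  "inv_stereo_deriv u h $ 3 = - 4 * (u$1 * h$1 + u$2 * h$2) / (stereo_denom u)\<^sup>2"
  by (simp_all add: inv_stereo_deriv_def axis_def)

lemma has_derivative_inv_stereo: "(inv_stereo has_derivative inv_stereo_deriv u) (at u)"
proof -
  have denom: "(stereo_denom has_derivative (\<lambda>h. 2 * (u$1 * h$1 + u$2 * h$2))) (at u)"
    unfolding stereo_denom_def[abs_def]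
    by (rule derivative_eq_intros refl | simp)+ (simp add: algebra_simps)
  have third: "(\<lambda>u. (1 - u$1 * u$1 - u$2 * u$2) / stereo_denom u) = (\<lambda>u. 2 / stereo_denom u - 1)"
    by (rule ext) (metis inv_stereo_nth(3) inv_stereo_3_eq)
  have "((\<lambda>u. 2 * u$1 / stereo_denom u) has_derivative
      (\<lambda>h. 2 * h$1 / stereo_denom u - 4 * u$1 * (u$1 * h$1 + u$2 * h$2) / (stereo_denom u)\<^sup>2)) (at u)"
    by (rule derivative_eq_intros denom refl | simp)+ (simp add: field_simps power2_eq_square)
  moreover have "((\<lambda>u. 2 * u$2 / stereo_denom u) has_derivative
      (\<lambda>h. 2 * h$2 / stereo_denom u - 4 * u$2 * (u$1 * h$1 + u$2 * h$2) / (stereo_denom u)\<^sup>2)) (at u)"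
    by (rule derivative_eq_intros denom refl | simp)+ (simp add: field_simps power2_eq_square)
  moreover have "((\<lambda>u. (1 - u$1 * u$1 - u$2 * u$2) / stereo_denom u) has_derivative
      (\<lambda>h. - 4 * (u$1 * h$1 + u$2 * h$2) / (stereo_denom u)\<^sup>2)) (at u)"
    unfolding third
    by (rule derivative_eq_intros denom refl | simp)+ (simp add: field_simps power2_eq_square)
  ultimately show ?thesis
    unfolding inv_stereo_def[abs_def] inv_stereo_deriv_def[abs_def]
    by (intro has_derivative_add has_derivative_scaleR_left)
qed

lemma inj_inv_stereo_deriv: "inj (inv_stereo_deriv u)"
proof (rule injI)
  fix x y assume eq: "inv_stereo_deriv u x = inv_stereo_deriv u y"
  have radial: "u$1 * x$1 + u$2 * x$2 = u$1 * y$1 + u$2 * y$2"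
    using arg_cong[OF eq, of "\<lambda>v. v $ 3"] by simp
  have "x$1 = y$1" "x$2 = y$2"
    using arg_cong[OF eq, of "\<lambda>v. v $ 1"] arg_cong[OF eq, of "\<lambda>v. v $ 2"]
    unfolding inv_stereo_deriv_nth radial by simp_all
  then show "x = y"
    by (simp add: vec_eq_iff forall_2)
qed

lemma cross3_inv_stereo_deriv:
  "cross3 (inv_stereo_deriv u (axis 1 1)) (inv_stereo_deriv u (axis 2 1))
     = (4 / (stereo_denom u)\<^sup>2) *\<^sub>R inv_stereo u"
proof -
  define k where "k = inverse (stereo_denom u)"
  have k: "k * (1 + u$1 * u$1 + u$2 * u$2) = 1"
    by (simp add: k_def stereo_denom_def[symmetric])
  have div1: "x / stereo_denom u = x * k" and div2: "x / (stereo_denom u)\<^sup>2 = x * k * k" for x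
    by (simp_all add: k_def divide_inverse power2_eq_square)
  have axis: "(axis 1 1 :: real^2) $ 1 = 1" "(axis 1 1 :: real^2) $ 2 = 0"
    "(axis 2 1 :: real^2) $ 1 = 0" "(axis 2 1 :: real^2) $ 2 = 1"
    by (simp_all add: axis_def)
  show ?thesis
    unfolding vec_eq_iff forall_3 cross_components
    using k by (simp only: inv_stereo_nth inv_stereo_deriv_nth vector_scaleR_component real_scaleR_def axis div1 div2) algebra
qed

section \<open>Hemispheres are admissible discs\<close>

definition hemisphere :: "real \<Rightarrow> real^2 \<Rightarrow> real^3" where
  "hemisphere R u = R *\<^sub>R inv_stereo u"

lemma hemisphere_3: "hemisphere R u $ 3 = R * inv_stereo u $ 3"
  by (simp add: hemisphere_def del: inv_stereo_nth)

lemma norm_hemisphere: "R > 0 \<Longrightarrow> norm (hemisphere R u) = R"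
  by (simp add: hemisphere_def)

lemma rational_fun_stereo_denom: "rational_fun stereo_denom"
proof -
  have "rational_fun (\<lambda>u::real^2. (1 + u$1 * u$1) + u$2 * u$2)"
    by (intro rational_fun.add rational_fun.mult rational_fun.const rational_fun.coord)
  then show ?thesis
    by (simp add: stereo_denom_def[abs_def])
qed

lemma rational_map_hemisphere: "rational_map (hemisphere R)"
proof -
  have inv: "rational_fun (\<lambda>u. inverse (stereo_denom u))"
    using rational_fun_stereo_denom by (rule rational_fun.inverse) simp
  have "hemisphere R = (\<lambda>u. (R * (2 * u$1) * inverse (stereo_denom u)) *\<^sub>R axis 1 1
      + (R * (2 * u$2) * inverse (stereo_denom u)) *\<^sub>R axis 2 1
      + (R * (1 + (- (u$1 * u$1) + - (u$2 * u$2))) * inverse (stereo_denom u)) *\<^sub>R axis 3 1)"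
    by (rule ext) (simp add: hemisphere_def inv_stereo_def divide_inverse algebra_simps)
  then show ?thesis
    by (simp only:) (intro rational_map.add rational_map.scale rational_fun.mult inv rational_fun.const
        rational_fun.coord rational_fun.add rational_fun_minus)
qed

lemma has_derivative_hemisphere:
  "(hemisphere R has_derivative (\<lambda>h. R *\<^sub>R inv_stereo_deriv u h)) (at u)"
  unfolding hemisphere_def[abs_def] by (intro has_derivative_scaleR_right has_derivative_inv_stereo)

lemma frechet_derivative_hemisphere:
  "frechet_derivative (hemisphere R) (at u) = (\<lambda>h. R *\<^sub>R inv_stereo_deriv u h)"
  using has_derivative_hemisphere by (rule frechet_derivative_at[symmetric])

lemma Nrm_hemisphere: "Nrm (hemisphere R) u = (4 * R\<^sup>2 / (stereo_denom u)\<^sup>2) *\<^sub>R inv_stereo u"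
  by (simp add: Nrm_def pd1_def pd2_def frechet_derivative_hemisphere cross_mult_left cross_mult_right
      cross3_inv_stereo_deriv power2_eq_square)

lemma norm_Nrm_hemisphere: "norm (Nrm (hemisphere R) u) = 4 * R\<^sup>2 / (stereo_denom u)\<^sup>2"
  by (simp add: Nrm_hemisphere)

lemma unit_Nrm_hemisphere: "R \<noteq> 0 \<Longrightarrow> Nrm (hemisphere R) u /\<^sub>R norm (Nrm (hemisphere R) u) = inv_stereo u"
  by (simp add: norm_Nrm_hemisphere Nrm_hemisphere)

lemma hemisphere_image:
  assumes "R > 0"
  shows "hemisphere R ` Disc = {q. norm q = R \<and> q$3 \<ge> 0}"
proof (intro equalityI subsetI)
  fix q assume "q \<in> hemisphere R ` Disc"
  then obtain u where "norm u \<le> 1" "q = hemisphere R u"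
    by (auto simp: Disc_def)
  then show "q \<in> {q. norm q = R \<and> q$3 \<ge> 0}"
    using assms inv_stereo_3_nonneg_iff[of u] by (simp add: norm_hemisphere hemisphere_3 del: inv_stereo_nth)
next
  fix q :: "real^3" assume "q \<in> {q. norm q = R \<and> q$3 \<ge> 0}"
  then have "norm (q /\<^sub>R R) = 1" "(q /\<^sub>R R) $ 3 \<ge> 0"
    using assms by simp_all
  then obtain u where "norm u \<le> 1" "inv_stereo u = q /\<^sub>R R"
    by (rule inv_stereo_onto_upper_hemisphere)
  then show "q \<in> hemisphere R ` Disc"
    using assms by (auto simp: Disc_def hemisphere_def intro!: image_eqI[of _ _ u])
qed

lemma connected_component_bounded_inside_sphere:
  fixes x :: "'a::real_normed_vector"
  assumes "x \<in> S" and "norm x < R" and sphere_free: "\<And>y. y \<in> S \<Longrightarrow> norm y \<noteq> R"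
  shows "connected_component_set S x \<subseteq> ball 0 R"
proof -
  let ?C = "connected_component_set S x"
  have "ball 0 R \<inter> ?C = {} \<or> - cball 0 R \<inter> ?C = {}"
  proof (rule connectedD)
    show "?C \<subseteq> ball 0 R \<union> - cball 0 R"
      using connected_component_subset[of S x] sphere_free by (force simp: dist_norm)
  qed (auto simp: open_Compl)
  moreover have "x \<in> ball 0 R \<inter> ?C"
    using assms(1,2) by simp
  ultimately have "- cball 0 R \<inter> ?C = {}"
    by blast
  then show ?thesis
    using connected_component_subset[of S x] sphere_free by (force simp: dist_norm)
qed

lemma connected_component_unbounded_outside_sphere:
  fixes x :: "real^3"
  assumes "0 < x$3" and "R < norm x" and "R > 0"
  shows "\<not> bounded (connected_component_set {y. 0 < y$3 \<and> norm y \<noteq> R} x)"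
proof
  define L where "L = (\<lambda>\<tau>::real. \<tau> *\<^sub>R x) ` {1..}"
  assume "bounded (connected_component_set {y. 0 < y$3 \<and> norm y \<noteq> R} x)"
  moreover have "L \<subseteq> connected_component_set {y. 0 < y$3 \<and> norm y \<noteq> R} x"
  proof (rule connected_component_maximal)
    show "x \<in> L"
      unfolding L_def by (rule image_eqI[of _ _ 1]) auto
    show "connected L"
      unfolding L_def by (intro connected_continuous_image continuous_intros) simp
    show "L \<subseteq> {y. 0 < y$3 \<and> norm y \<noteq> R}"
    proof
      fix y assume "y \<in> L"
      then obtain \<tau> where \<tau>: "\<tau> \<ge> 1" "y = \<tau> *\<^sub>R x"
        unfolding L_def by auto
      have "R < \<tau> * norm x"
        using assms(2) \<tau>(1) mult_le_cancel_right1[of "norm x" \<tau>] by simp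
      then show "y \<in> {y. 0 < y$3 \<and> norm y \<noteq> R}"
        using \<tau> assms(1) by simp
    qed
  qed
  ultimately obtain B where B: "\<And>y. y \<in> L \<Longrightarrow> norm y \<le> B"
    unfolding bounded_iff by (meson subsetD)
  define \<tau> where "\<tau> = (\<bar>B\<bar> + 1) / norm x + 1"
  have "norm x > 0"
    using assms by linarith
  then have in_L: "\<tau> *\<^sub>R x \<in> L" and "norm (\<tau> *\<^sub>R x) = \<bar>B\<bar> + 1 + norm x"
    unfolding L_def \<tau>_def by (auto simp: field_simps)
  then show False
    using B[OF in_L] abs_ge_self[of B] \<open>norm x > 0\<close> by linarith
qed

lemma Omega_hemisphere:
  assumes "R > 0"
  shows "Omega (hemisphere R) = {x. 0 < x$3 \<and> norm x < R}"
proof -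
  define S where "S = {y::real^3. 0 < y$3 \<and> norm y \<noteq> R}"
  have "{x::real^3. 0 < x$3} - hemisphere R ` Disc = S"
    using assms by (auto simp: hemisphere_image S_def)
  moreover have "bounded (connected_component_set S x)" if "x \<in> S" "norm x < R" for x
    using connected_component_bounded_inside_sphere[OF that] bounded_subset[OF bounded_ball]
    by (auto simp: S_def)
  moreover have "\<not> bounded (connected_component_set S x)" if "x \<in> S" "norm x > R" for x
    using connected_component_unbounded_outside_sphere that assms by (simp add: S_def)
  ultimately show ?thesis
    unfolding Omega_def Let_def by (auto simp: S_def linorder_neq_iff)
qed

lemma out_sign_hemisphere:
  assumes R: "R > 0"
  shows "out_sign (hemisphere R) = 1"
proof -
  have "\<forall>\<^sub>F t in at_right 0.
      hemisphere R u + t *\<^sub>R (Nrm (hemisphere R) u /\<^sub>R norm (Nrm (hemisphere R) u)) \<notin> Omega (hemisphere R) \<and>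
      hemisphere R u - t *\<^sub>R (Nrm (hemisphere R) u /\<^sub>R norm (Nrm (hemisphere R) u)) \<in> Omega (hemisphere R)"
    if "u \<in> ball 0 1" for u
    using eventually_at_right_real[OF R]
  proof (rule eventually_mono)
    fix t :: real assume t: "t \<in> {0<..<R}"
    have "inv_stereo u $ 3 > 0"
      using that inv_stereo_3_pos_iff[of u] by (simp del: inv_stereo_nth)
    moreover have "hemisphere R u + t *\<^sub>R (Nrm (hemisphere R) u /\<^sub>R norm (Nrm (hemisphere R) u))
        = (R + t) *\<^sub>R inv_stereo u"
      and "hemisphere R u - t *\<^sub>R (Nrm (hemisphere R) u /\<^sub>R norm (Nrm (hemisphere R) u))
        = (R - t) *\<^sub>R inv_stereo u"
      using R by (simp_all add: unit_Nrm_hemisphere hemisphere_def scaleR_add_left scaleR_diff_left)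
    ultimately show "hemisphere R u + t *\<^sub>R (Nrm (hemisphere R) u /\<^sub>R norm (Nrm (hemisphere R) u)) \<notin> Omega (hemisphere R) \<and>
      hemisphere R u - t *\<^sub>R (Nrm (hemisphere R) u /\<^sub>R norm (Nrm (hemisphere R) u)) \<in> Omega (hemisphere R)"
      using R t by (simp add: Omega_hemisphere del: inv_stereo_nth)
  qed
  then show ?thesis
    unfolding out_sign_def by simp
qed

lemma nu_hemisphere: "R > 0 \<Longrightarrow> nu (hemisphere R) u = inv_stereo u"
  by (simp add: nu_def out_sign_hemisphere unit_Nrm_hemisphere)

lemma nu3_hemisphere: "R > 0 \<Longrightarrow> nu3 (hemisphere R) u = inv_stereo u $ 3"
  by (simp add: nu3_def nu_hemisphere E3_def inner_axis del: inv_stereo_nth)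

lemma smooth_upto_const: "smooth_upto (\<lambda>u::real^'n. c :: real) S"
  unfolding smooth_upto_def
  by (intro exI[of _ "\<lambda>u. c"] exI[of _ UNIV]) (simp add: smooth_on_open_rational_fun rational_fun.const)

lemma admissible_hemisphere:
  assumes R: "R > 0"
  shows "admissible_disc (hemisphere R)"
  unfolding admissible_disc_def
proof (intro conjI ballI)
  show "smooth_embedded_disc (hemisphere R)"
    unfolding smooth_embedded_disc_def
  proof (intro conjI ballI)
    show "smooth_upto (hemisphere R) Disc"
      unfolding smooth_upto_def
      by (intro exI[of _ "hemisphere R"] exI[of _ UNIV])
         (simp add: smooth_on_open_rational_map rational_map_hemisphere)
    show "inj_on (hemisphere R) Disc"
      using inj_inv_stereo R by (simp add: inj_on_def inj_def hemisphere_def)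
    show "hemisphere R differentiable at u" for u
      using has_derivative_hemisphere by (auto simp: differentiable_def)
    show "inj (frechet_derivative (hemisphere R) (at u))" for u
      using inj_inv_stereo_deriv[of u] R by (simp add: frechet_derivative_hemisphere inj_def)
  qed
  show "0 < hemisphere R u $ 3" if "u \<in> ball 0 1" for u
    using that R inv_stereo_3_pos_iff[of u] by (simp add: hemisphere_3 del: inv_stereo_nth)
  show "hemisphere R u $ 3 = 0" if "u \<in> sphere 0 1" for u
    using that inv_stereo_3_eq_0_iff[of u] by (simp add: hemisphere_3 del: inv_stereo_nth)
  have "nu3 (hemisphere R) u / hemisphere R u $ 3 = 1 / R" if "u \<in> ball 0 1" for u
    using that R inv_stereo_3_pos_iff[of u] by (simp add: nu3_hemisphere hemisphere_3 del: inv_stereo_nth)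
  then show "\<exists>g. smooth_upto g Disc \<and> (\<forall>u\<in>ball 0 1. g u = nu3 (hemisphere R) u / hemisphere R u $ 3)"
    using smooth_upto_const by fastforce
qed

section \<open>The functionals on hemispheres\<close>

definition stereo_area_density :: "real^2 \<Rightarrow> real" where
  "stereo_area_density u = 4 / (stereo_denom u)\<^sup>2"

lemma stereo_area_density_le_4: "stereo_area_density u \<le> 4"
proof -
  have "1 \<le> stereo_denom u"
    by (simp add: stereo_denom_eq)
  then have "1 \<le> (stereo_denom u)\<^sup>2"
    by (simp add: one_le_power)
  then show ?thesis
    by (simp add: stereo_area_density_def divide_le_eq)
qed

lemma stereo_area_density_ge_1: "norm u < 1 \<Longrightarrow> 1 \<le> stereo_area_density u"
proof -
  assume "norm u < 1"
  then have "stereo_denom u < 2"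
    using abs_square_less_1[of "norm u"] by (simp add: stereo_denom_eq)
  then have "(stereo_denom u)\<^sup>2 < 2\<^sup>2"
    using stereo_denom_pos[of u] by (intro power_strict_mono) simp_all
  then show ?thesis
    by (simp add: stereo_area_density_def field_simps)
qed

lemma integrable_stereo_area_density: "stereo_area_density integrable_on ball 0 1"
proof (rule measurable_bounded_by_integrable_imp_integrable)
  have "continuous_on UNIV stereo_area_density"
    unfolding stereo_area_density_def stereo_denom_def[abs_def]
    by (intro continuous_intros) (simp add: stereo_denom_def[symmetric])
  then show "stereo_area_density \<in> borel_measurable (lebesgue_on (ball 0 1))"
    by (intro continuous_imp_measurable_on_sets_lebesgue) (auto intro: continuous_on_subset)
  show "norm (stereo_area_density u) \<le> 4" for u
    using stereo_area_density_le_4[of u] by (simp add: stereo_area_density_def)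
qed (simp_all add: integrable_on_const)

lemma integral_stereo_area_density_pos: "integral (ball 0 1) stereo_area_density > 0"
proof -
  have "integral (ball (0::real^2) 1) (\<lambda>x. 1) \<le> integral (ball 0 1) stereo_area_density"
    using integrable_stereo_area_density stereo_area_density_ge_1
    by (intro integral_le) (simp_all add: integrable_on_const)
  moreover have "integral (ball (0::real^2) 1) (\<lambda>x. 1) = measure lborel (ball (0::real^2) 1)"
    using lmeasure_integral[of "ball (0::real^2) 1"] measure_completion[of "ball (0::real^2) 1" lborel]
    by simp
  moreover have "measure lborel (ball (0::real^2) 1) > 0"
    by simp
  ultimately show ?thesis
    by linarith
qed

lemma U_R_hemisphere:
  assumes R: "R > 0"
  shows "U_R (hemisphere R) = - R * integral (ball 0 1) stereo_area_density"
proof -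
  have "surf_int (hemisphere R) (ball 0 1) (\<lambda>u. nu3 (hemisphere R) u / hemisphere R u $ 3)
      = integral (ball 0 1) (\<lambda>u. R * stereo_area_density u)"
    unfolding surf_int_def
  proof (rule integral_cong)
    fix u :: "real^2" assume "u \<in> ball 0 1"
    then have "inv_stereo u $ 3 > 0"
      using inv_stereo_3_pos_iff[of u] by (simp del: inv_stereo_nth)
    then show "nu3 (hemisphere R) u / hemisphere R u $ 3 * norm (Nrm (hemisphere R) u)
        = R * stereo_area_density u"
      using R by (simp add: nu3_hemisphere hemisphere_3 norm_Nrm_hemisphere stereo_area_density_def
          power2_eq_square del: inv_stereo_nth)
  qed
  then show ?thesis
    by (simp add: U_R_def)
qed

lemma dn_z_hemisphere:
  assumes "R > 0"
  shows "dn_z (hemisphere R) u = - sqrt (1 - (inv_stereo u $ 3)\<^sup>2)"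
proof -
  define c where "c = inv_stereo u"
  define g where "g = E3 - c$3 *\<^sub>R c"
  have unit: "(c$1)\<^sup>2 + (c$2)\<^sup>2 + (c$3)\<^sup>2 = 1"
    using norm_inv_stereo[of u] unfolding c_def norm_vec3 by (simp del: inv_stereo_nth)
  have "(g$1)\<^sup>2 + (g$2)\<^sup>2 + (g$3)\<^sup>2 = (c$3)\<^sup>2 * ((c$1)\<^sup>2 + (c$2)\<^sup>2 + (c$3)\<^sup>2) - 2 * (c$3)\<^sup>2 + 1"
    by (simp add: g_def E3_def axis_def power2_eq_square algebra_simps)
  then have norm_g: "norm g = sqrt (1 - (c$3)\<^sup>2)"
    unfolding norm_vec3 unit by simp
  have g3: "g$3 = 1 - (c$3)\<^sup>2"
    by (simp add: g_def E3_def axis_def power2_eq_square)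
  have "0 \<le> 1 - (c$3)\<^sup>2"
    using unit zero_le_power2[of "c$1"] zero_le_power2[of "c$2"] by linarith
  then have "- (g$3 / norm g) = - sqrt (1 - (c$3)\<^sup>2)"
    by (simp add: g3 norm_g real_div_sqrt)
  moreover have "dn_z (hemisphere R) u = - (g$3 / norm g)"
    using assms by (simp add: dn_z_def g_def c_def nu3_hemisphere nu_hemisphere E3_def inner_axis
        divide_inverse mult.commute del: inv_stereo_nth)
  ultimately show ?thesis
    by (simp add: c_def)
qed

lemma hemisphere_level_set:
  assumes "0 < z" and "z < R"
  shows "hemisphere R ` {u \<in> Disc. hemisphere R u $ 3 = z} = horizontal_circle z (sqrt (R\<^sup>2 - z\<^sup>2))"
proof -
  have R: "R > 0"
    using assms by linarith
  have radius: "(sqrt (R\<^sup>2 - z\<^sup>2))\<^sup>2 = R\<^sup>2 - z\<^sup>2"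
    using assms by (simp add: power_mono)
  show ?thesis
  proof (intro equalityI subsetI)
    fix q assume "q \<in> hemisphere R ` {u \<in> Disc. hemisphere R u $ 3 = z}"
    then obtain u where "hemisphere R u $ 3 = z" "q = hemisphere R u"
      by blast
    moreover have "(q$1)\<^sup>2 + (q$2)\<^sup>2 + (q$3)\<^sup>2 = R\<^sup>2"
      using calculation R norm_hemisphere norm_vec3_eq_iff[of R q] by simp
    ultimately show "q \<in> horizontal_circle z (sqrt (R\<^sup>2 - z\<^sup>2))"
      unfolding horizontal_circle_def radius by simp
  next
    fix q assume "q \<in> horizontal_circle z (sqrt (R\<^sup>2 - z\<^sup>2))"
    then have q3: "q$3 = z" and "(q$1)\<^sup>2 + (q$2)\<^sup>2 + (q$3)\<^sup>2 = R\<^sup>2"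
      unfolding horizontal_circle_def radius by simp_all
    then have "norm q = R"
      using R norm_vec3_eq_iff[of R q] by simp
    then have "q \<in> hemisphere R ` Disc"
      using R assms(1) q3 by (simp add: hemisphere_image)
    then show "q \<in> hemisphere R ` {u \<in> Disc. hemisphere R u $ 3 = z}"
      using q3 by blast
  qed
qed

lemma line_int_hemisphere_level:
  assumes "0 < z" and "z < R"
  shows "line_int (hemisphere R ` {u \<in> Disc. hemisphere R u $ 3 = z})
      (\<lambda>p. dn_z (hemisphere R) (THE u. u \<in> Disc \<and> hemisphere R u = p)) = - 2 * pi * (R\<^sup>2 - z\<^sup>2) / R"
proof -
  have R: "R > 0"
    using assms by linarith
  have "line_int (hemisphere R ` {u \<in> Disc. hemisphere R u $ 3 = z})
      (\<lambda>p. dn_z (hemisphere R) (THE u. u \<in> Disc \<and> hemisphere R u = p))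
      = 2 * pi * sqrt (R\<^sup>2 - z\<^sup>2) * - sqrt (1 - (z / R)\<^sup>2)"
    unfolding hemisphere_level_set[OF assms]
  proof (rule line_int_horizontal_circle)
    show "sqrt (R\<^sup>2 - z\<^sup>2) > 0"
      using assms by (simp add: power_strict_mono)
    fix q assume "q \<in> horizontal_circle z (sqrt (R\<^sup>2 - z\<^sup>2))"
    then obtain u where u: "u \<in> Disc" "hemisphere R u $ 3 = z" "q = hemisphere R u"
      unfolding hemisphere_level_set[OF assms, symmetric] by auto
    have "(THE v. v \<in> Disc \<and> hemisphere R v = q) = u"
      using u inj_inv_stereo R by (intro the_equality) (auto simp: inj_def hemisphere_def)
    moreover have "inv_stereo u $ 3 = z / R"
      using u(2) R by (simp add: hemisphere_3 field_simps del: inv_stereo_nth)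
    ultimately show "dn_z (hemisphere R) (THE v. v \<in> Disc \<and> hemisphere R v = q) = - sqrt (1 - (z / R)\<^sup>2)"
      using dn_z_hemisphere[OF R] by simp
  qed
  also have "sqrt (R\<^sup>2 - z\<^sup>2) = R * sqrt (1 - (z / R)\<^sup>2)"
  proof -
    have "1 - (z / R)\<^sup>2 = (R\<^sup>2 - z\<^sup>2) / R\<^sup>2"
      using R by (simp add: field_simps power_divide)
    then show ?thesis
      using R by (simp add: real_sqrt_divide)
  qed
  also have "2 * pi * (R * sqrt (1 - (z / R)\<^sup>2)) * - sqrt (1 - (z / R)\<^sup>2) = - 2 * pi * R * (1 - (z / R)\<^sup>2)"
    using assms by (simp add: power_divide divide_le_eq power_mono)
  also have "\<dots> = - 2 * pi * (R\<^sup>2 - z\<^sup>2) / R"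
    using R by (simp add: field_simps power2_eq_square)
  finally show ?thesis .
qed

definition truncated_area :: "(real^2 \<Rightarrow> real^3) \<Rightarrow> real \<Rightarrow> real" where
  "truncated_area \<phi> zl = surf_int \<phi> {u \<in> Disc. \<phi> u $ 3 \<ge> zl} (\<lambda>u. 1 / (\<phi> u $ 3)\<^sup>2)
    + (1 / zl) * line_int (\<phi> ` {u \<in> Disc. \<phi> u $ 3 = zl}) (\<lambda>p. dn_z \<phi> (THE u. u \<in> Disc \<and> \<phi> u = p))"

lemma A_R_eq_Lim_truncated_area: "A_R \<phi> = Lim (at_right 0) (truncated_area \<phi>)"
  unfolding A_R_def truncated_area_def ..

lemma truncated_area_hemisphere:
  assumes "0 < z" and "z < R"
  shows "truncated_area (hemisphere R) z
    = surf_int (hemisphere 1) {u \<in> Disc. hemisphere 1 u $ 3 \<ge> z / R} (\<lambda>u. 1 / (hemisphere 1 u $ 3)\<^sup>2)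
      - 2 * pi * (1 - (z / R)\<^sup>2) / (z / R)"
proof -
  have R: "R > 0"
    using assms by linarith
  have "{u \<in> Disc. hemisphere R u $ 3 \<ge> z} = {u \<in> Disc. hemisphere 1 u $ 3 \<ge> z / R}"
    using R by (auto simp: hemisphere_3 field_simps simp del: inv_stereo_nth)
  moreover have "1 / (hemisphere R u $ 3)\<^sup>2 * norm (Nrm (hemisphere R) u)
      = 1 / (hemisphere 1 u $ 3)\<^sup>2 * norm (Nrm (hemisphere 1) u)" for u
    using R by (cases "inv_stereo u $ 3 = 0")
      (simp_all add: hemisphere_3 norm_Nrm_hemisphere power2_eq_square field_simps del: inv_stereo_nth)
  moreover have "1 / z * (- 2 * pi * (R\<^sup>2 - z\<^sup>2) / R) = - (2 * pi * (1 - (z / R)\<^sup>2) / (z / R))"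
    using assms R by (simp add: field_simps power2_eq_square)
  ultimately show ?thesis
    unfolding truncated_area_def line_int_hemisphere_level[OF assms] surf_int_def by simp
qed

lemma truncated_area_hemisphere_rescale:
  assumes "0 < z" and "z < R"
  shows "truncated_area (hemisphere R) z = truncated_area (hemisphere 1) (z / R)"
proof -
  have "0 < z / R" and "z / R < 1"
    using assms by simp_all
  then show ?thesis
    using truncated_area_hemisphere[OF assms] truncated_area_hemisphere[of "z / R" 1] by simp
qed

lemma A_R_hemisphere:
  assumes "R > 0"
  shows "A_R (hemisphere R) = A_R (hemisphere 1)"
proof -
  have "A_R (hemisphere R) = Lim (at_right 0) (\<lambda>z. truncated_area (hemisphere 1) (z / R))"
    unfolding A_R_eq_Lim_truncated_area
    using eventually_at_right_real[OF assms]
    by (intro Lim_cong) (auto elim!: eventually_mono intro: truncated_area_hemisphere_rescale)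
  also have "\<dots> = A_R (hemisphere 1)"
    unfolding A_R_eq_Lim_truncated_area using assms by (rule Lim_at_right_0_rescale)
  finally show ?thesis .
qed

lemma G_R_hemisphere:
  assumes "R > 0"
  shows "G_R c (hemisphere R) = A_R (hemisphere 1) + 2 * c * integral (ball 0 1) stereo_area_density * R"
  using A_R_hemisphere[OF assms] U_R_hemisphere[OF assms] by (simp add: G_R_def)

lemma G_R_unbounded_above:
  assumes "c > 0"
  obtains \<phi> where "admissible_disc \<phi>" and "M < G_R c \<phi>"
proof -
  define K where "K = 2 * c * integral (ball 0 1) stereo_area_density"
  have K: "K > 0"
    unfolding K_def using assms integral_stereo_area_density_pos by simp
  define R where "R = (\<bar>M\<bar> + \<bar>A_R (hemisphere 1)\<bar> + 1) / K"
  have "R > 0" and "K * R = \<bar>M\<bar> + \<bar>A_R (hemisphere 1)\<bar> + 1"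
    unfolding R_def using K by (simp_all add: add_pos_nonneg)
  moreover have "G_R c (hemisphere R) = A_R (hemisphere 1) + K * R"
    using G_R_hemisphere[OF \<open>R > 0\<close>] by (simp add: K_def)
  ultimately have "M < G_R c (hemisphere R)"
    using abs_ge_self[of M] abs_ge_minus_self[of "A_R (hemisphere 1)"] by linarith
  then show ?thesis
    using that admissible_hemisphere \<open>R > 0\<close> by blast
qed

theorem mainTheorem7:
  fixes c\<^sub>o :: real
  assumes "c\<^sub>o > 0"
  shows "\<not> (\<exists>\<phi>\<^sub>0. admissible_disc \<phi>\<^sub>0 \<and>
            (\<forall>\<phi>. admissible_disc \<phi> \<longrightarrow> - G_R c\<^sub>o \<phi>\<^sub>0 \<le> - G_R c\<^sub>o \<phi>))"
proof
  assume "\<exists>\<phi>\<^sub>0. admissible_disc \<phi>\<^sub>0 \<and> (\<forall>\<phi>. admissible_disc \<phi> \<longrightarrow> - G_R c\<^sub>o \<phi>\<^sub>0 \<le> - G_R c\<^sub>o \<phi>)"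
  then obtain \<phi>\<^sub>0 where min: "\<And>\<phi>. admissible_disc \<phi> \<Longrightarrow> - G_R c\<^sub>o \<phi>\<^sub>0 \<le> - G_R c\<^sub>o \<phi>"
    by blast
  obtain \<phi> where "admissible_disc \<phi>" and "G_R c\<^sub>o \<phi>\<^sub>0 < G_R c\<^sub>o \<phi>"
    using G_R_unbounded_above[OF assms] .
  then show False
    using min[of \<phi>] by linarith
qed

end
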